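(* If $(A,S)$ is a $\mathbb B_2$-contraction on a Hilbert space, then $(A,S,0)$ is a $\mathbb P$-contraction.
   Context: The pentablock is $\mathbb P=\{(a_{21},\operatorname{tr}A_0,\det A_0): A_0=[a_{ij}]\in M_2(\mathbb C),\ \|A_0\|<1\}\subset\mathbb C^3$; $\overline{\mathbb B}_2$ is the closed Euclidean unit ball of $\mathbb C^2$. A compact $K$ is a spectral set for a commuting tuple if its Taylor joint spectrum lies in $K$ and $\|f(\underline T)\|\le\sup_K|f|$ for every rational $f$ with no poles in $K$. A $\mathbb B_2$-contraction (resp. $\mathbb P$-contraction) is a commuting pair (resp. triple) having $\overline{\mathbb B}_2$ (resp. $\overline{\mathbb P}$) as a spectral set. *)

theory Defs
  imports "HOL-Analysis.Analysis"
begin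

text \<open>A complex Hilbert space H is modelled as a real Hilbert space (a type of class
real_inner and complete_space) together with an orthogonal operator J with J o J = -1,
which realises multiplication by the imaginary unit. Bounded complex-linear operators
on H are exactly the bounded real-linear operators commuting with J; the operator norm
is the same as the real one.\<close>

definition complex_structure :: "('h::{real_inner,complete_space} \<Rightarrow>\<^sub>L 'h) \<Rightarrow> bool" where
  "complex_structure J \<longleftrightarrow>
     J o\<^sub>L J = - id_blinfun \<and> (\<forall>x y. inner (J x) (J y) = inner x y)"

definition cscal :: "('h::real_normed_vector \<Rightarrow>\<^sub>L 'h) \<Rightarrow> complex \<Rightarrow> ('h \<Rightarrow>\<^sub>L 'h)" where
  "cscal J c = Re c *\<^sub>R id_blinfun + Im c *\<^sub>R J"

definition clinear_op :: "('h::real_normed_vector \<Rightarrow>\<^sub>L 'h) \<Rightarrow> ('h \<Rightarrow>\<^sub>L 'h) \<Rightarrow> bool" where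
  "clinear_op J T \<longleftrightarrow> T o\<^sub>L J = J o\<^sub>L T"

definition op_pow :: "('h::real_normed_vector \<Rightarrow>\<^sub>L 'h) \<Rightarrow> nat \<Rightarrow> ('h \<Rightarrow>\<^sub>L 'h)" where
  "op_pow T n = ((\<lambda>X. T o\<^sub>L X) ^^ n) id_blinfun"

definition commuting_pair :: "('h::real_normed_vector \<Rightarrow>\<^sub>L 'h) \<Rightarrow> ('h \<Rightarrow>\<^sub>L 'h) \<Rightarrow> ('h \<Rightarrow>\<^sub>L 'h) \<Rightarrow> bool" where
  "commuting_pair J T1 T2 \<longleftrightarrow> clinear_op J T1 \<and> clinear_op J T2 \<and> T1 o\<^sub>L T2 = T2 o\<^sub>L T1"

definition commuting_triple :: "('h::real_normed_vector \<Rightarrow>\<^sub>L 'h) \<Rightarrow> ('h \<Rightarrow>\<^sub>L 'h) \<Rightarrow> ('h \<Rightarrow>\<^sub>L 'h) \<Rightarrow> ('h \<Rightarrow>\<^sub>L 'h) \<Rightarrow> bool" where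
  "commuting_triple J T1 T2 T3 \<longleftrightarrow> clinear_op J T1 \<and> clinear_op J T2 \<and> clinear_op J T3 \<and>
     T1 o\<^sub>L T2 = T2 o\<^sub>L T1 \<and> T1 o\<^sub>L T3 = T3 o\<^sub>L T1 \<and> T2 o\<^sub>L T3 = T3 o\<^sub>L T2"

text \<open>Koszul complex of a commuting pair (A,B):
  0 -> H -> H^2 -> H -> 0,  x |-> (A x, B x),  (y,z) |-> B y - A z.\<close>
definition koszul_exact2 :: "('h::real_normed_vector \<Rightarrow> 'h) \<Rightarrow> ('h \<Rightarrow> 'h) \<Rightarrow> bool" where
  "koszul_exact2 A B \<longleftrightarrow>
     (\<forall>x. A x = 0 \<and> B x = 0 \<longrightarrow> x = 0) \<and>
     (\<forall>y z. B y - A z = 0 \<longrightarrow> (\<exists>x. y = A x \<and> z = B x)) \<and>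
     (\<forall>w. \<exists>y z. w = B y - A z)"

text \<open>Koszul complex of a commuting triple (A,B,C):
  0 -> H -> H^3 -> H^3 -> H -> 0 with
  d0 x = (A x, B x, C x),
  d1 (u,v,w) = (B u - A v, C u - A w, C v - B w),
  d2 (p,q,r) = C p - B q + A r.\<close>
definition koszul_exact3 :: "('h::real_normed_vector \<Rightarrow> 'h) \<Rightarrow> ('h \<Rightarrow> 'h) \<Rightarrow> ('h \<Rightarrow> 'h) \<Rightarrow> bool" where
  "koszul_exact3 A B C \<longleftrightarrow>
     (\<forall>x. A x = 0 \<and> B x = 0 \<and> C x = 0 \<longrightarrow> x = 0) \<and>
     (\<forall>u v w. B u - A v = 0 \<and> C u - A w = 0 \<and> C v - B w = 0 \<longrightarrow>
        (\<exists>x. u = A x \<and> v = B x \<and> w = C x)) \<and>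
     (\<forall>p q r. C p - B q + A r = 0 \<longrightarrow>
        (\<exists>u v w. p = B u - A v \<and> q = C u - A w \<and> r = C v - B w)) \<and>
     (\<forall>s. \<exists>p q r. s = C p - B q + A r)"

definition taylor_spectrum2 ::
  "('h::real_normed_vector \<Rightarrow>\<^sub>L 'h) \<Rightarrow> ('h \<Rightarrow>\<^sub>L 'h) \<Rightarrow> ('h \<Rightarrow>\<^sub>L 'h) \<Rightarrow> (complex \<times> complex) set" where
  "taylor_spectrum2 J T1 T2 =
     {(z1, z2). \<not> koszul_exact2 (blinfun_apply (T1 - cscal J z1)) (blinfun_apply (T2 - cscal J z2))}"

definition taylor_spectrum3 ::
  "('h::real_normed_vector \<Rightarrow>\<^sub>L 'h) \<Rightarrow> ('h \<Rightarrow>\<^sub>L 'h) \<Rightarrow> ('h \<Rightarrow>\<^sub>L 'h) \<Rightarrow> ('h \<Rightarrow>\<^sub>L 'h)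
     \<Rightarrow> (complex \<times> complex \<times> complex) set" where
  "taylor_spectrum3 J T1 T2 T3 =
     {(z1, z2, z3). \<not> koszul_exact3 (blinfun_apply (T1 - cscal J z1))
        (blinfun_apply (T2 - cscal J z2)) (blinfun_apply (T3 - cscal J z3))}"

definition poly2_eval :: "(nat \<times> nat \<Rightarrow> complex) \<Rightarrow> complex \<times> complex \<Rightarrow> complex" where
  "poly2_eval c z = (\<Sum>(i,j)\<in>{k. c k \<noteq> 0}. c (i,j) * fst z ^ i * snd z ^ j)"

definition poly3_eval :: "(nat \<times> nat \<times> nat \<Rightarrow> complex) \<Rightarrow> complex \<times> complex \<times> complex \<Rightarrow> complex" where
  "poly3_eval c z = (\<Sum>(i,j,k)\<in>{m. c m \<noteq> 0}.
      c (i,j,k) * fst z ^ i * fst (snd z) ^ j * snd (snd z) ^ k)"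

definition poly2_op :: "('h::real_normed_vector \<Rightarrow>\<^sub>L 'h) \<Rightarrow> (nat \<times> nat \<Rightarrow> complex)
     \<Rightarrow> ('h \<Rightarrow>\<^sub>L 'h) \<Rightarrow> ('h \<Rightarrow>\<^sub>L 'h) \<Rightarrow> ('h \<Rightarrow>\<^sub>L 'h)" where
  "poly2_op J c T1 T2 = (\<Sum>(i,j)\<in>{k. c k \<noteq> 0}.
      cscal J (c (i,j)) o\<^sub>L op_pow T1 i o\<^sub>L op_pow T2 j)"

definition poly3_op :: "('h::real_normed_vector \<Rightarrow>\<^sub>L 'h) \<Rightarrow> (nat \<times> nat \<times> nat \<Rightarrow> complex)
     \<Rightarrow> ('h \<Rightarrow>\<^sub>L 'h) \<Rightarrow> ('h \<Rightarrow>\<^sub>L 'h) \<Rightarrow> ('h \<Rightarrow>\<^sub>L 'h) \<Rightarrow> ('h \<Rightarrow>\<^sub>L 'h)" where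
  "poly3_op J c T1 T2 T3 = (\<Sum>(i,j,k)\<in>{m. c m \<noteq> 0}.
      cscal J (c (i,j,k)) o\<^sub>L op_pow T1 i o\<^sub>L op_pow T2 j o\<^sub>L op_pow T3 k)"

text \<open>K is a spectral set for the commuting tuple: the Taylor spectrum lies in K, and for
every rational function f = p/q with q zero-free on K, f(T) = p(T) q(T)^{-1} is defined
(q(T) invertible) and has norm at most sup over K of |f|.\<close>
definition spectral_set2 :: "(complex \<times> complex) set \<Rightarrow> ('h::{real_inner,complete_space} \<Rightarrow>\<^sub>L 'h)
     \<Rightarrow> ('h \<Rightarrow>\<^sub>L 'h) \<Rightarrow> ('h \<Rightarrow>\<^sub>L 'h) \<Rightarrow> bool" where
  "spectral_set2 K J T1 T2 \<longleftrightarrow>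
     taylor_spectrum2 J T1 T2 \<subseteq> K \<and>
     (\<forall>p q. finite {k. p k \<noteq> 0} \<and> finite {k. q k \<noteq> 0} \<and> (\<forall>z\<in>K. poly2_eval q z \<noteq> 0) \<longrightarrow>
        (\<exists>R. R o\<^sub>L poly2_op J q T1 T2 = id_blinfun \<and> poly2_op J q T1 T2 o\<^sub>L R = id_blinfun \<and>
             norm (poly2_op J p T1 T2 o\<^sub>L R) \<le> (SUP z\<in>K. cmod (poly2_eval p z / poly2_eval q z))))"

definition spectral_set3 :: "(complex \<times> complex \<times> complex) set \<Rightarrow> ('h::{real_inner,complete_space} \<Rightarrow>\<^sub>L 'h)
     \<Rightarrow> ('h \<Rightarrow>\<^sub>L 'h) \<Rightarrow> ('h \<Rightarrow>\<^sub>L 'h) \<Rightarrow> ('h \<Rightarrow>\<^sub>L 'h) \<Rightarrow> bool" where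
  "spectral_set3 K J T1 T2 T3 \<longleftrightarrow>
     taylor_spectrum3 J T1 T2 T3 \<subseteq> K \<and>
     (\<forall>p q. finite {k. p k \<noteq> 0} \<and> finite {k. q k \<noteq> 0} \<and> (\<forall>z\<in>K. poly3_eval q z \<noteq> 0) \<longrightarrow>
        (\<exists>R. R o\<^sub>L poly3_op J q T1 T2 T3 = id_blinfun \<and> poly3_op J q T1 T2 T3 o\<^sub>L R = id_blinfun \<and>
             norm (poly3_op J p T1 T2 T3 o\<^sub>L R) \<le> (SUP z\<in>K. cmod (poly3_eval p z / poly3_eval q z))))"

definition closed_ball2 :: "(complex \<times> complex) set" where
  "closed_ball2 = {(z1, z2). (cmod z1)\<^sup>2 + (cmod z2)\<^sup>2 \<le> 1}"

definition mat_norm2 :: "complex^2^2 \<Rightarrow> real" where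
  "mat_norm2 A = onorm (\<lambda>x. A *v x)"

definition pentablock :: "(complex \<times> complex \<times> complex) set" where
  "pentablock = {(A $ 2 $ 1, A $ 1 $ 1 + A $ 2 $ 2, det A) | A. mat_norm2 A < 1}"

definition B2_contraction :: "('h::{real_inner,complete_space} \<Rightarrow>\<^sub>L 'h) \<Rightarrow> ('h \<Rightarrow>\<^sub>L 'h) \<Rightarrow> ('h \<Rightarrow>\<^sub>L 'h) \<Rightarrow> bool" where
  "B2_contraction J T1 T2 \<longleftrightarrow> commuting_pair J T1 T2 \<and> spectral_set2 closed_ball2 J T1 T2"

definition P_contraction :: "('h::{real_inner,complete_space} \<Rightarrow>\<^sub>L 'h) \<Rightarrow> ('h \<Rightarrow>\<^sub>L 'h) \<Rightarrow> ('h \<Rightarrow>\<^sub>L 'h) \<Rightarrow> ('h \<Rightarrow>\<^sub>L 'h) \<Rightarrow> bool" where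
  "P_contraction J T1 T2 T3 \<longleftrightarrow> commuting_triple J T1 T2 T3 \<and> spectral_set3 (closure pentablock) J T1 T2 T3"

end

theory Submission
  imports Defs
begin

text \<open>The map (a, s) \<mapsto> (a, s, 0) sends the closed ball into the closed pentablock: for
|a|^2 + |s|^2 < 1 the matrix [[s, 0], [a, 0]] has norm below 1 and pentablock coordinates
(a, s, 0). On the operator side, the Koszul complex of (A - z1, S - z2, -z3) is exact when
z3 \<noteq> 0, since the third operator is then invertible and commutes with the others, and
for z3 = 0 it is exact as soon as the complex of the pair is. So the Taylor spectrum of
(A, S, 0) is the image of that of (A, S). Finally, a rational function of (A, S, 0) is the
rational function of (A, S) obtained by setting the third variable to 0, so its norm is
bounded by a supremum over the ball, hence over the closed pentablock.\<close>

lemma cscal_apply: "cscal J c x = Re c *\<^sub>R x + Im c *\<^sub>R J x"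
  by (simp add: cscal_def blinfun.add_left blinfun.scaleR_left)

lemma cscal_one: "cscal J 1 = id_blinfun"
  by (simp add: cscal_def)

lemma cscal_zero: "cscal J 0 = 0"
  by (simp add: cscal_def)

lemma cscal_minus: "cscal J (- c) = - cscal J c"
  by (simp add: cscal_def algebra_simps)

lemma complex_structure_square:
  assumes "complex_structure J"
  shows "J (J x) = - x"
proof -
  have "(J o\<^sub>L J) x = (- id_blinfun) x"
    using assms by (simp add: complex_structure_def)
  then show ?thesis by (simp add: blinfun.minus_left)
qed

lemma cscal_mult:
  assumes "complex_structure J"
  shows "cscal J z o\<^sub>L cscal J w = cscal J (z * w)"
  by (rule blinfun_eqI)
    (simp add: cscal_apply blinfun.add_right blinfun.scaleR_right
      complex_structure_square[OF assms] algebra_simps)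

lemma cscal_inverse:
  assumes "complex_structure J" and "c \<noteq> 0"
  shows "cscal J c o\<^sub>L cscal J (inverse c) = id_blinfun"
    and "cscal J (inverse c) o\<^sub>L cscal J c = id_blinfun"
  using assms by (simp_all add: cscal_mult cscal_one)

lemma clinear_op_cscal:
  assumes "complex_structure J"
  shows "clinear_op J (cscal J c)"
  unfolding clinear_op_def
  by (rule blinfun_eqI)
    (simp add: cscal_apply blinfun.add_right blinfun.scaleR_right complex_structure_square[OF assms])

lemma clinear_op_diff:
  assumes "clinear_op J S" and "clinear_op J T"
  shows "clinear_op J (S - T)"
  using assms unfolding clinear_op_def
  by (simp add: bounded_bilinear.diff_left[OF bounded_bilinear_blinfun_compose]
      bounded_bilinear.diff_right[OF bounded_bilinear_blinfun_compose])

lemma clinear_op_commute_cscal: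
  assumes "clinear_op J T"
  shows "T o\<^sub>L cscal J c = cscal J c o\<^sub>L T"
proof (rule blinfun_eqI)
  fix x
  have "T (J x) = J (T x)"
    using assms unfolding clinear_op_def by (metis blinfun_apply_blinfun_compose)
  then show "(T o\<^sub>L cscal J c) x = (cscal J c o\<^sub>L T) x"
    by (simp add: cscal_apply blinfun.add_right blinfun.scaleR_right)
qed

lemma koszul_exact3_if_invertible:
  fixes A B C D :: "'h::real_normed_vector \<Rightarrow>\<^sub>L 'h"
  assumes "C o\<^sub>L D = id_blinfun" and "D o\<^sub>L C = id_blinfun"
    and "A o\<^sub>L C = C o\<^sub>L A" and "B o\<^sub>L C = C o\<^sub>L B"
  shows "koszul_exact3 (blinfun_apply A) (blinfun_apply B) (blinfun_apply C)"
proof -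
  have CD: "C (D x) = x" and DC: "D (C x) = x" for x
    using assms(1,2) by (metis blinfun_apply_blinfun_compose blinfun_apply_id_blinfun)+
  have AC: "A (C x) = C (A x)" and BC: "B (C x) = C (B x)" for x
    using assms(3,4) by (metis blinfun_apply_blinfun_compose)+
  have AD: "A (D x) = D (A x)" and BD: "B (D x) = D (B x)" for x
    by (metis AC BC CD DC)+
  show ?thesis unfolding koszul_exact3_def
  proof (intro conjI allI impI)
    fix x assume "A x = 0 \<and> B x = 0 \<and> C x = 0"
    then show "x = 0" by (metis DC blinfun.zero_right)
  next
    fix u v w assume "B u - A v = 0 \<and> C u - A w = 0 \<and> C v - B w = 0"
    then have "C u = A w" "C v = B w" by simp_all
    then have "u = A (D w) \<and> v = B (D w) \<and> w = C (D w)"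
      by (metis AD BD CD DC)
    then show "\<exists>x. u = A x \<and> v = B x \<and> w = C x" by blast
  next
    fix p q r assume "C p - B q + A r = 0"
    then have "C p = B q - A r" by (simp add: algebra_simps)
    then have "p = B (D q) - A (D r)" by (metis AD BD DC blinfun.diff_right)
    then show "\<exists>u v w. p = B u - A v \<and> q = C u - A w \<and> r = C v - B w"
      by (intro exI[of _ "D q"] exI[of _ "D r"] exI[of _ 0]) (simp add: CD)
  next
    fix s show "\<exists>p q r. s = C p - B q + A r"
      by (intro exI[of _ "D s"] exI[of _ 0]) (simp add: CD)
  qed
qed

lemma koszul_exact3_zero:
  fixes A B :: "'h::real_normed_vector \<Rightarrow>\<^sub>L 'h"
  assumes "koszul_exact2 (blinfun_apply A) (blinfun_apply B)"
  shows "koszul_exact3 (blinfun_apply A) (blinfun_apply B) (\<lambda>x. 0)"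
proof -
  have ker: "\<And>x. A x = 0 \<Longrightarrow> B x = 0 \<Longrightarrow> x = 0"
    and mid: "\<And>y z. B y - A z = 0 \<Longrightarrow> \<exists>x. y = A x \<and> z = B x"
    and surj: "\<And>w. \<exists>y z. w = B y - A z"
    using assms unfolding koszul_exact2_def by blast+
  show ?thesis unfolding koszul_exact3_def
  proof (intro conjI allI impI)
    fix x assume "A x = 0 \<and> B x = 0 \<and> 0 = (0::'h)"
    then show "x = 0" using ker by blast
  next
    fix u v w assume "B u - A v = 0 \<and> 0 - A w = 0 \<and> 0 - B w = 0"
    then show "\<exists>x. u = A x \<and> v = B x \<and> w = 0"
      using ker[of w] mid[of u v] by auto
  next
    fix p q r assume "0 - B q + A r = 0"
    then obtain x where x: "q = A x" "r = B x" using mid[of q r] by (auto simp: algebra_simps)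
    obtain u v where "p = B u - A v" using surj by blast
    then show "\<exists>u v w. p = B u - A v \<and> q = 0 - A w \<and> r = 0 - B w"
      using x by (intro exI[of _ u] exI[of _ v] exI[of _ "-x"]) (simp add: blinfun.minus_right)
  next
    fix s obtain y z where "s = B y - A z" using surj by blast
    then have "s = 0 - B (-y) + A (-z)" by (simp add: blinfun.minus_right)
    then show "\<exists>p q r. s = 0 - B q + A r" by blast
  qed
qed

lemma taylor_spectrum3_zero_subset:
  assumes J: "complex_structure J" and "clinear_op J A" and "clinear_op J S"
  shows "taylor_spectrum3 J A S 0 \<subseteq> (\<lambda>(z1, z2). (z1, z2, 0)) ` taylor_spectrum2 J A S"
proof
  fix z assume "z \<in> taylor_spectrum3 J A S 0"
  then obtain z1 z2 z3 where z: "z = (z1, z2, z3)"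
    and not_exact: "\<not> koszul_exact3 (blinfun_apply (A - cscal J z1))
      (blinfun_apply (S - cscal J z2)) (blinfun_apply (0 - cscal J z3))"
    unfolding taylor_spectrum3_def by blast
  let ?A = "A - cscal J z1" and ?S = "S - cscal J z2" and ?C = "0 - cscal J z3"
  have "clinear_op J ?A" "clinear_op J ?S"
    using assms by (simp_all add: clinear_op_diff clinear_op_cscal)
  then have commute: "?A o\<^sub>L ?C = ?C o\<^sub>L ?A" "?S o\<^sub>L ?C = ?C o\<^sub>L ?S"
    by (simp_all add: clinear_op_commute_cscal flip: cscal_minus)
  have "z3 = 0"
  proof (rule ccontr)
    assume "z3 \<noteq> 0"
    then have "?C o\<^sub>L cscal J (inverse (- z3)) = id_blinfun"
      "cscal J (inverse (- z3)) o\<^sub>L ?C = id_blinfun"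
      using cscal_inverse[OF J, of "- z3"] by (simp_all add: cscal_minus)
    with commute not_exact koszul_exact3_if_invertible show False by blast
  qed
  moreover have "blinfun_apply ?C = (\<lambda>x. 0)"
    using \<open>z3 = 0\<close> by (simp add: cscal_zero zero_blinfun.rep_eq)
  then have "\<not> koszul_exact2 (blinfun_apply ?A) (blinfun_apply ?S)"
    using not_exact koszul_exact3_zero by metis
  ultimately show "z \<in> (\<lambda>(z1, z2). (z1, z2, 0)) ` taylor_spectrum2 J A S"
    using z by (force simp: taylor_spectrum2_def)
qed

definition first_column_matrix :: "complex \<Rightarrow> complex \<Rightarrow> complex^2^2" where
  "first_column_matrix s a = (\<chi> i j. if j = 1 then (if i = 1 then s else a) else 0)"

lemma mat_norm2_first_column_matrix_le:
  "mat_norm2 (first_column_matrix s a) \<le> sqrt ((cmod a)^2 + (cmod s)^2)"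
  unfolding mat_norm2_def
proof (rule onorm_le)
  fix x :: "complex^2"
  let ?r = "sqrt ((cmod a)^2 + (cmod s)^2)"
  have "first_column_matrix s a *v x = (\<chi> i. (if i = 1 then s else a) * x $ 1)"
    by (simp add: first_column_matrix_def matrix_vector_mult_def vec_eq_iff sum_2)
  then have "norm (first_column_matrix s a *v x) = sqrt ((cmod s * cmod (x $ 1))^2 + (cmod a * cmod (x $ 1))^2)"
    by (simp add: norm_vec_def L2_set_def sum_2 norm_mult)
  also have "\<dots> = ?r * cmod (x $ 1)"
    by (simp add: power_mult_distrib real_sqrt_mult flip: distrib_right)
  also have "\<dots> \<le> ?r * norm x"
    by (intro mult_left_mono Finite_Cartesian_Product.norm_nth_le) simp
  finally show "norm (first_column_matrix s a *v x) \<le> ?r * norm x" .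
qed

lemma in_pentablock_if_in_ball:
  assumes "(cmod a)^2 + (cmod s)^2 < 1"
  shows "(a, s, 0) \<in> pentablock"
proof -
  let ?M = "first_column_matrix s a"
  have "mat_norm2 ?M < 1"
    using order_le_less_trans[OF mat_norm2_first_column_matrix_le] assms by simp
  moreover have "(a, s, 0) = (?M $ 2 $ 1, ?M $ 1 $ 1 + ?M $ 2 $ 2, det ?M)"
    by (simp add: first_column_matrix_def det_2)
  ultimately show ?thesis
    unfolding pentablock_def by blast
qed

lemma in_closure_pentablock_if_in_closed_ball2:
  assumes "(a, s) \<in> closed_ball2"
  shows "(a, s, 0) \<in> closure pentablock"
proof -
  define c :: "nat \<Rightarrow> real" where "c n = 1 - 1 / real (n + 2)" for n
  have c: "0 \<le> c n" "c n < 1" for n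
    by (auto simp: c_def field_simps)
  have "(c n *\<^sub>R a, c n *\<^sub>R s, 0) \<in> pentablock" for n
  proof (rule in_pentablock_if_in_ball)
    have "(cmod (c n *\<^sub>R a))^2 + (cmod (c n *\<^sub>R s))^2 = (c n)^2 * ((cmod a)^2 + (cmod s)^2)"
      using c(1) by (simp add: power_mult_distrib algebra_simps)
    also have "\<dots> \<le> (c n)^2"
      using assms by (simp add: closed_ball2_def mult_left_le)
    also have "\<dots> < 1"
      using c by (simp add: power_less_one_iff)
    finally show "(cmod (c n *\<^sub>R a))^2 + (cmod (c n *\<^sub>R s))^2 < 1" .
  qed
  moreover have "c \<longlonglongrightarrow> 1"
    using LIMSEQ_ignore_initial_segment[OF lim_1_over_n, of 2]
    unfolding c_def by (auto intro: tendsto_eq_intros)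
  then have "(\<lambda>n. (c n *\<^sub>R a, c n *\<^sub>R s, 0)) \<longlonglongrightarrow> (a, s, 0::complex)"
    by (auto intro!: tendsto_eq_intros)
  ultimately show ?thesis
    unfolding closure_sequential by (intro exI[of _ "\<lambda>n. (c n *\<^sub>R a, c n *\<^sub>R s, 0)"]) simp
qed

lemma mat_norm2_entry_le:
  fixes A :: "complex^2^2"
  shows "cmod (A $ i $ j) \<le> mat_norm2 A"
proof -
  have axis_norm: "norm (axis j (1::complex)) = 1"
    by (simp add: inner_axis' norm_eq_1)
  have "cmod (A $ i $ j) = cmod ((A *v axis j 1) $ i)"
    by (simp add: matrix_vector_mult_def axis_def if_distrib cong: if_cong)
  also have "\<dots> \<le> norm (A *v axis j 1)"
    by (rule Finite_Cartesian_Product.norm_nth_le)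
  also have "\<dots> \<le> mat_norm2 A * norm (axis j (1::complex))"
    unfolding mat_norm2_def by (rule onorm) simp
  finally show ?thesis
    using axis_norm by simp
qed

lemma bounded_pentablock: "bounded pentablock"
  unfolding bounded_iff
proof (intro exI ballI)
  fix x assume "x \<in> pentablock"
  then obtain A where x: "x = (A $ 2 $ 1, A $ 1 $ 1 + A $ 2 $ 2, det A)" and "mat_norm2 A < 1"
    unfolding pentablock_def by blast
  then have e: "cmod (A $ i $ j) \<le> 1" for i j
    using mat_norm2_entry_le[of A i j] by simp
  have "norm (A $ 1 $ 1 + A $ 2 $ 2) \<le> 2"
    using e[of 1 1] e[of 2 2] norm_triangle_ineq[of "A $ 1 $ 1" "A $ 2 $ 2"] by simp
  moreover have "norm (det A) \<le> 2"
  proof -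
    have "norm (det A) \<le> norm (A $ 1 $ 1 * A $ 2 $ 2) + norm (A $ 1 $ 2 * A $ 2 $ 1)"
      unfolding det_2 by (rule norm_triangle_ineq4)
    also have "\<dots> \<le> 1 * 1 + 1 * 1"
      unfolding norm_mult by (intro add_mono mult_mono e) auto
    finally show ?thesis by simp
  qed
  moreover have "norm x \<le> norm (A $ 2 $ 1) + (norm (A $ 1 $ 1 + A $ 2 $ 2) + norm (det A))"
    unfolding x by (meson add_left_mono norm_Pair_le order_trans)
  ultimately show "norm x \<le> 5"
    using e[of 2 1] by simp
qed

lemma finite_support_last_zero:
  assumes "finite {m. p m \<noteq> 0}"
  shows "finite {k. (\<lambda>(i, j). p (i, j, 0::nat)) k \<noteq> 0}"
proof -
  have "inj (\<lambda>(i, j). (i, j, 0::nat))"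
    by (auto simp: inj_on_def)
  from finite_vimageI[OF assms this] show ?thesis
    by (simp add: vimage_def case_prod_beta)
qed

lemma sum_support_last_zero:
  fixes F :: "nat \<times> nat \<times> nat \<Rightarrow> 'a::comm_monoid_add"
  assumes "finite {m. p m \<noteq> 0}" and "\<And>i j k. k \<noteq> 0 \<Longrightarrow> F (i, j, k) = 0"
  shows "(\<Sum>m\<in>{m. p m \<noteq> 0}. F m) = (\<Sum>(i, j)\<in>{k. (\<lambda>(i, j). p (i, j, 0)) k \<noteq> 0}. F (i, j, 0))"
proof -
  let ?emb = "\<lambda>(i, j). (i, j, 0::nat)"
  have "(\<Sum>m\<in>{m. p m \<noteq> 0}. F m) = (\<Sum>m\<in>?emb ` {k. (\<lambda>(i, j). p (i, j, 0)) k \<noteq> 0}. F m)"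
    using assms by (intro sum.mono_neutral_right) (auto simp: image_iff, metis neq0_conv)
  also have "\<dots> = (\<Sum>(i, j)\<in>{k. (\<lambda>(i, j). p (i, j, 0)) k \<noteq> 0}. F (i, j, 0))"
    by (subst sum.reindex) (auto simp: inj_on_def case_prod_beta)
  finally show ?thesis .
qed

lemma poly3_eval_last_zero:
  assumes "finite {m. p m \<noteq> 0}"
  shows "poly3_eval p (a, s, 0) = poly2_eval (\<lambda>(i, j). p (i, j, 0)) (a, s)"
  unfolding poly3_eval_def poly2_eval_def
  by (subst sum_support_last_zero[OF assms]) (auto simp: case_prod_beta)

lemma op_pow_0: "op_pow T 0 = id_blinfun"
  by (simp add: op_pow_def)

lemma op_pow_zero_Suc: "op_pow 0 (Suc n) = 0"
  by (simp add: op_pow_def)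

lemma poly3_op_last_zero:
  assumes "finite {m. p m \<noteq> 0}"
  shows "poly3_op J p A S 0 = poly2_op J (\<lambda>(i, j). p (i, j, 0)) A S"
proof -
  have compose_id: "X o\<^sub>L id_blinfun = X" for X :: "'a \<Rightarrow>\<^sub>L 'a"
    by (rule blinfun_eqI) simp
  show ?thesis
    unfolding poly3_op_def poly2_op_def
    by (subst sum_support_last_zero[OF assms])
      (auto simp: case_prod_beta op_pow_0 op_pow_zero_Suc compose_id gr0_conv_Suc)
qed

lemma continuous_on_poly3_eval: "continuous_on X (poly3_eval p)"
  unfolding poly3_eval_def case_prod_beta
  by (intro continuous_intros)

lemma bdd_above_poly3_quotient:
  assumes "compact L" and "\<forall>z\<in>L. poly3_eval q z \<noteq> 0"
  shows "bdd_above ((\<lambda>z. cmod (poly3_eval p z / poly3_eval q z)) ` L)"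
proof -
  have "continuous_on L (\<lambda>z. cmod (poly3_eval p z / poly3_eval q z))"
    using assms(2) by (intro continuous_intros continuous_on_poly3_eval) auto
  with assms(1) show ?thesis
    by (metis compact_continuous_image compact_imp_bounded bounded_imp_bdd_above)
qed

lemma spectral_set3_last_zero:
  assumes J: "complex_structure J" and "clinear_op J A" and "clinear_op J S"
    and K: "spectral_set2 K J A S" "K \<noteq> {}"
    and L: "compact L" "(\<lambda>(z1, z2). (z1, z2, 0)) ` K \<subseteq> L"
  shows "spectral_set3 L J A S 0"
  unfolding spectral_set3_def
proof (intro conjI allI impI)
  show "taylor_spectrum3 J A S 0 \<subseteq> L"
    using taylor_spectrum3_zero_subset[OF assms(1-3)] K(1) L(2)
    unfolding spectral_set2_def by blast
next
  fix p q :: "nat \<times> nat \<times> nat \<Rightarrow> complex"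
  assume "finite {k. p k \<noteq> 0} \<and> finite {k. q k \<noteq> 0} \<and> (\<forall>z\<in>L. poly3_eval q z \<noteq> 0)"
  then have fin: "finite {k. p k \<noteq> 0}" "finite {k. q k \<noteq> 0}"
    and q_nonzero: "\<forall>z\<in>L. poly3_eval q z \<noteq> 0" by blast+
  define p2 where "p2 = (\<lambda>(i, j). p (i, j, 0))"
  define q2 where "q2 = (\<lambda>(i, j). q (i, j, 0))"
  have eval: "poly2_eval p2 z = poly3_eval p (fst z, snd z, 0)"
    "poly2_eval q2 z = poly3_eval q (fst z, snd z, 0)" for z
    unfolding p2_def q2_def using fin by (simp_all add: poly3_eval_last_zero)
  have embed: "(fst z, snd z, 0) \<in> L" if "z \<in> K" for z
    using L(2) that by force
  have "finite {k. p2 k \<noteq> 0}" "finite {k. q2 k \<noteq> 0}"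
    using fin by (simp_all add: p2_def q2_def finite_support_last_zero)
  moreover have "\<forall>z\<in>K. poly2_eval q2 z \<noteq> 0"
    using q_nonzero embed by (simp add: eval)
  ultimately obtain R where R: "R o\<^sub>L poly2_op J q2 A S = id_blinfun" "poly2_op J q2 A S o\<^sub>L R = id_blinfun"
    and R_bound: "norm (poly2_op J p2 A S o\<^sub>L R) \<le> (SUP z\<in>K. cmod (poly2_eval p2 z / poly2_eval q2 z))"
    using K(1) unfolding spectral_set2_def by blast
  have "(SUP z\<in>K. cmod (poly2_eval p2 z / poly2_eval q2 z))
      \<le> (SUP z\<in>L. cmod (poly3_eval p z / poly3_eval q z))"
    using K(2) bdd_above_poly3_quotient[OF L(1) q_nonzero] embed
    by (intro cSUP_mono) (auto simp: eval)
  with R R_bound show "\<exists>R. R o\<^sub>L poly3_op J q A S 0 = id_blinfun \<and> poly3_op J q A S 0 o\<^sub>L R = id_blinfun \<and>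
      norm (poly3_op J p A S 0 o\<^sub>L R) \<le> (SUP z\<in>L. cmod (poly3_eval p z / poly3_eval q z))"
    using fin by (auto simp: poly3_op_last_zero p2_def q2_def)
qed

theorem mainTheorem13:
  fixes J A S :: "'h::{real_inner,complete_space} \<Rightarrow>\<^sub>L 'h"
  assumes "complex_structure J"
    and "B2_contraction J A S"
  shows "P_contraction J A S 0"
proof -
  have A: "clinear_op J A" and S: "clinear_op J S" and "A o\<^sub>L S = S o\<^sub>L A"
    and ball: "spectral_set2 closed_ball2 J A S"
    using assms(2) unfolding B2_contraction_def commuting_pair_def by auto
  then have "commuting_triple J A S 0"
    by (simp add: commuting_triple_def clinear_op_def)
  moreover have "closed_ball2 \<noteq> {}"
    by (auto simp: closed_ball2_def intro!: exI[of _ 0])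
  moreover have "compact (closure pentablock)"
    using bounded_pentablock by (simp add: compact_closure)
  moreover have "(\<lambda>(z1, z2). (z1, z2, 0)) ` closed_ball2 \<subseteq> closure pentablock"
    using in_closure_pentablock_if_in_closed_ball2 by auto
  ultimately show ?thesis
    unfolding P_contraction_def using spectral_set3_last_zero[OF assms(1) A S ball] by blast
qed

end
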